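(* Fix $\alpha\in(0,1)$ and $L\in\mathbb{N}$. Every $f\in\mathcal{N}_1(L)$ is an $\alpha$-power piecewise linear function with at most $L+1$ linear pieces.
   Context: Leaky-ReLU: $\sigma_\alpha(x)=\max(\alpha x,x)$. $\mathcal{N}_1(L)$ is the set of functions $f_L:\mathbb{R}\to\mathbb{R}$ with $f_0(x)=w_0x+b_0$, $f_k(x)=w_k\sigma_\alpha(f_{k-1}(x))+b_k$ ($k=1,\dots,L$), $w_k,b_k\in\mathbb{R}$. A piecewise linear (PL) function is a continuous function $g:\mathbb{R}\to\mathbb{R}$ which is affine on each of finitely many intervals partitioning $\mathbb{R}$ (separated by finitely many breakpoints). A PL function $g$ is called $\alpha$-power PL if there is a constant $c\in\mathbb{R}$ such that the slope of every linear piece of $g$ lies in $\{c\alpha^k: k\in\mathbb{Z}\}$. *)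

theory Defs
  imports "HOL-Analysis.Analysis"
begin

definition leaky_relu :: "real \<Rightarrow> real \<Rightarrow> real" where
  "leaky_relu \<alpha> x = max (\<alpha> * x) x"

fun net_eval :: "real \<Rightarrow> (real \<times> real) list \<Rightarrow> real \<Rightarrow> real" where
  "net_eval \<alpha> [] x = x"
| "net_eval \<alpha> [(w,b)] x = w * x + b"
| "net_eval \<alpha> ((w,b) # ps) x = w * leaky_relu \<alpha> (net_eval \<alpha> ps x) + b"

text \<open>ps is stored outermost-layer first: ps = [(wL,bL),...,(w0,b0)].\<close>
definition NN1 :: "real \<Rightarrow> nat \<Rightarrow> (real \<Rightarrow> real) set" where
  "NN1 \<alpha> L = {f. \<exists>ps. length ps = L + 1 \<and> f = net_eval \<alpha> ps}"

text \<open>Closed pieces force continuity.\<close>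
definition pl_with_pieces :: "(real \<Rightarrow> real) \<Rightarrow> real list \<Rightarrow> real list \<Rightarrow> real list \<Rightarrow> bool" where
  "pl_with_pieces g ts a c \<longleftrightarrow>
     sorted_wrt (<) ts \<and> length a = length ts + 1 \<and> length c = length ts + 1 \<and>
     (\<forall>i < length ts + 1. \<forall>x.
        (i = 0 \<or> ts ! (i - 1) \<le> x) \<and> (i = length ts \<or> x \<le> ts ! i)
        \<longrightarrow> g x = a ! i * x + c ! i)"

definition alpha_power_PL_at_most :: "real \<Rightarrow> nat \<Rightarrow> (real \<Rightarrow> real) \<Rightarrow> bool" where
  "alpha_power_PL_at_most \<alpha> n g \<longleftrightarrow>
     (\<exists>ts a c. pl_with_pieces g ts a c \<and> length a \<le> n \<and>
        (\<exists>k0::real. \<forall>s \<in> set a. \<exists>k::int. s = k0 * \<alpha> powi k))"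

end

theory Submission imports Defs begin

text \<open>Every layer output is a monotone (or antitone) continuous function, so it changes sign
  at most once; after the leaky ReLU the next layer is therefore the previous one scaled by
  one of the slopes \<open>w\<close> or \<open>w \<alpha>\<close> on either side of a single point. Gluing the two scaled
  copies adds at most one breakpoint and multiplies every slope by \<open>w\<close> times a power of \<open>\<alpha>\<close>.\<close>

definition affine_pieces_on ::
    "real set \<Rightarrow> (real \<Rightarrow> real) \<Rightarrow> real list \<Rightarrow> real list \<Rightarrow> real list \<Rightarrow> bool" where
  "affine_pieces_on S g ts a c \<longleftrightarrow>
     sorted_wrt (<) ts \<and> length a = length ts + 1 \<and> length c = length ts + 1 \<and>
     (\<forall>i < length ts + 1. \<forall>x\<in>S.
        (i = 0 \<or> ts ! (i - 1) \<le> x) \<and> (i = length ts \<or> x \<le> ts ! i)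
        \<longrightarrow> g x = a ! i * x + c ! i)"

lemma pl_with_pieces_iff_affine_pieces_on_UNIV:
  "pl_with_pieces g ts a c \<longleftrightarrow> affine_pieces_on UNIV g ts a c"
  unfolding pl_with_pieces_def affine_pieces_on_def by simp

lemma affine_pieces_on_take:
  assumes pieces: "affine_pieces_on S g ts a c"
    and n: "n \<le> length ts" "n < length ts \<Longrightarrow> z \<le> ts ! n"
  shows "affine_pieces_on (S \<inter> {..z}) g (take n ts) (take (n + 1) a) (take (n + 1) c)"
  unfolding affine_pieces_on_def
proof (intro conjI allI impI ballI)
  show "sorted_wrt (<) (take n ts)"
    using pieces by (simp add: affine_pieces_on_def sorted_wrt_take)
  show "length (take (n + 1) a) = length (take n ts) + 1"
    and "length (take (n + 1) c) = length (take n ts) + 1"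
    using pieces n by (auto simp: affine_pieces_on_def)
next
  fix i x
  assume i: "i < length (take n ts) + 1" and x: "x \<in> S \<inter> {..z}"
    and bounds: "(i = 0 \<or> take n ts ! (i - 1) \<le> x) \<and> (i = length (take n ts) \<or> x \<le> take n ts ! i)"
  have "i \<le> n" using i n by simp
  have lower: "i = 0 \<or> ts ! (i - 1) \<le> x"
    using bounds i by (cases "i = 0") auto
  have upper: "i = length ts \<or> x \<le> ts ! i"
  proof (cases "i = n")
    case True
    then show ?thesis using x n by (cases "n < length ts") auto
  next
    case False
    then show ?thesis using bounds \<open>i \<le> n\<close> n by auto
  qed
  have "g x = a ! i * x + c ! i"
    using pieces lower upper x \<open>i \<le> n\<close> n unfolding affine_pieces_on_def by auto
  then show "g x = take (n + 1) a ! i * x + take (n + 1) c ! i"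
    using \<open>i \<le> n\<close> by simp
qed

lemma affine_pieces_on_drop:
  assumes pieces: "affine_pieces_on S g ts a c"
    and m: "m \<le> length ts" "0 < m \<Longrightarrow> ts ! (m - 1) \<le> z"
  shows "affine_pieces_on (S \<inter> {z..}) g (drop m ts) (drop m a) (drop m c)"
  unfolding affine_pieces_on_def
proof (intro conjI allI impI ballI)
  show "sorted_wrt (<) (drop m ts)"
    using pieces by (simp add: affine_pieces_on_def sorted_wrt_drop)
  show "length (drop m a) = length (drop m ts) + 1"
    and "length (drop m c) = length (drop m ts) + 1"
    using pieces m by (auto simp: affine_pieces_on_def)
next
  fix j x
  assume j: "j < length (drop m ts) + 1" and x: "x \<in> S \<inter> {z..}"
    and bounds: "(j = 0 \<or> drop m ts ! (j - 1) \<le> x) \<and> (j = length (drop m ts) \<or> x \<le> drop m ts ! j)"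
  have lower: "m + j = 0 \<or> ts ! (m + j - 1) \<le> x"
  proof (cases "j = 0")
    case True
    then show ?thesis using x m by (cases "m = 0") auto
  next
    case False
    then show ?thesis using bounds j m by (auto simp: add_diff_eq)
  qed
  have upper: "m + j = length ts \<or> x \<le> ts ! (m + j)"
    using bounds j m by auto
  have "g x = a ! (m + j) * x + c ! (m + j)"
    using pieces lower upper x j m unfolding affine_pieces_on_def by auto
  then show "g x = drop m a ! j * x + drop m c ! j"
    using pieces j m by (simp add: affine_pieces_on_def)
qed

lemma affine_pieces_on_append:
  assumes left: "affine_pieces_on (S \<inter> {..z}) g ts1 a1 c1"
    and right: "affine_pieces_on (S \<inter> {z..}) g ts2 a2 c2"
    and below: "\<forall>t\<in>set ts1. t < z" and above: "\<forall>t\<in>set ts2. z < t"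
  shows "affine_pieces_on S g (ts1 @ z # ts2) (a1 @ a2) (c1 @ c2)"
  unfolding affine_pieces_on_def
proof (intro conjI allI impI ballI)
  show "sorted_wrt (<) (ts1 @ z # ts2)"
    using left right below above
    by (auto simp: affine_pieces_on_def sorted_wrt_append intro: less_trans)
  show "length (a1 @ a2) = length (ts1 @ z # ts2) + 1"
    and "length (c1 @ c2) = length (ts1 @ z # ts2) + 1"
    using left right by (auto simp: affine_pieces_on_def)
next
  fix i x
  let ?ts = "ts1 @ z # ts2"
  assume i: "i < length ?ts + 1" and x: "x \<in> S"
    and bounds: "(i = 0 \<or> ?ts ! (i - 1) \<le> x) \<and> (i = length ?ts \<or> x \<le> ?ts ! i)"
  have la1: "length a1 = length ts1 + 1" and lc1: "length c1 = length ts1 + 1"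
    using left by (auto simp: affine_pieces_on_def)
  show "g x = (a1 @ a2) ! i * x + (c1 @ c2) ! i"
  proof (cases "i \<le> length ts1")
    case True
    have prev: "0 < i \<Longrightarrow> ?ts ! (i - 1) = ts1 ! (i - 1)"
      using True by (simp add: nth_append_left)
    have "?ts ! i \<le> z"
      using True below by (cases "i = length ts1") (auto simp: nth_append less_imp_le)
    then have "x \<le> z" using bounds True by auto
    moreover have "i = 0 \<or> ts1 ! (i - 1) \<le> x"
      using bounds prev by (metis neq0_conv)
    moreover have "i = length ts1 \<or> x \<le> ts1 ! i"
      using bounds True by (cases "i = length ts1") (auto simp: nth_append)
    ultimately have "g x = a1 ! i * x + c1 ! i"
      using left x True unfolding affine_pieces_on_def by auto
    then show ?thesis using True la1 lc1 by (simp add: nth_append)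
  next
    case False
    define j where "j = i - length ts1 - 1"
    have ij: "i = length ts1 + 1 + j" using False j_def by simp
    have prev: "?ts ! (i - 1) = (z # ts2) ! j" using ij by (simp add: nth_append)
    have j_le: "j \<le> length ts2" using i ij by simp
    have low: "(z # ts2) ! j \<le> x" using bounds prev ij by simp
    have "z \<le> x"
    proof (cases j)
      case (Suc k)
      then have "z < ts2 ! k" using above j_le by simp
      then show ?thesis using low Suc by simp
    qed (use low in simp)
    moreover have "j = 0 \<or> ts2 ! (j - 1) \<le> x"
      using low by (cases j) auto
    moreover have "j = length ts2 \<or> x \<le> ts2 ! j"
      using bounds ij by (auto simp: nth_append)
    ultimately have "g x = a2 ! j * x + c2 ! j"
      using right x i ij unfolding affine_pieces_on_def by auto
    then show ?thesis using ij la1 lc1 by (simp add: nth_append)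
  qed
qed

lemma sorted_downward_closed_prefix:
  fixes ts :: "'a::linorder list"
  assumes "sorted ts" and down: "\<And>s t. s \<le> t \<Longrightarrow> P t \<Longrightarrow> P s"
  shows "\<exists>n\<le>length ts. \<forall>i<length ts. P (ts ! i) \<longleftrightarrow> i < n"
proof (intro exI conjI allI impI)
  let ?n = "length (takeWhile P ts)"
  show "?n \<le> length ts" by (rule length_takeWhile_le)
  fix i assume i: "i < length ts"
  show "P (ts ! i) \<longleftrightarrow> i < ?n"
  proof
    assume "P (ts ! i)"
    show "i < ?n"
    proof (rule ccontr)
      assume "\<not> i < ?n"
      then have "ts ! ?n \<le> ts ! i" and "?n < length ts"
        using i \<open>sorted ts\<close> by (auto simp: sorted_nth_mono)
      then show False
        using \<open>P (ts ! i)\<close> down nth_length_takeWhile by blast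
    qed
  qed (metis nth_mem set_takeWhileD takeWhile_nth)
qed

lemma pl_with_pieces_affine_comp:
  assumes "pl_with_pieces h ts a c"
  shows "pl_with_pieces (\<lambda>x. p * h x + q) ts (map ((*) p) a) (map (\<lambda>s. p * s + q) c)"
  using assms unfolding pl_with_pieces_def by (auto simp: algebra_simps)

lemma pl_with_pieces_glue:
  assumes pl1: "pl_with_pieces g1 ts a1 c1" and pl2: "pl_with_pieces g2 ts a2 c2"
    and left: "\<forall>x\<le>z. g x = g1 x" and right: "\<forall>x\<ge>z. g x = g2 x"
  shows "\<exists>ts' a' c'. pl_with_pieces g ts' a' c' \<and> length a' \<le> length ts + 2 \<and>
           set a' \<subseteq> set a1 \<union> set a2"
proof -
  have "sorted ts"
    using pl1 by (simp add: pl_with_pieces_def strict_sorted_imp_sorted)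
  obtain n where n: "n \<le> length ts" and below: "\<forall>i<length ts. ts ! i < z \<longleftrightarrow> i < n"
    using sorted_downward_closed_prefix[OF \<open>sorted ts\<close>, of "\<lambda>t. t < z"] by force
  obtain m where m: "m \<le> length ts" and not_above: "\<forall>i<length ts. ts ! i \<le> z \<longleftrightarrow> i < m"
    using sorted_downward_closed_prefix[OF \<open>sorted ts\<close>, of "\<lambda>t. t \<le> z"] by force
  have "n \<le> m"
  proof (rule ccontr)
    assume "\<not> n \<le> m"
    then have "m < length ts" and "ts ! m < z" using n below by auto
    then show False using not_above by auto
  qed
  have "affine_pieces_on (UNIV \<inter> {..z}) g1 (take n ts) (take (n + 1) a1) (take (n + 1) c1)"
    using pl1 n below
    by (intro affine_pieces_on_take) (auto simp: pl_with_pieces_iff_affine_pieces_on_UNIV)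
  then have "affine_pieces_on (UNIV \<inter> {..z}) g (take n ts) (take (n + 1) a1) (take (n + 1) c1)"
    using left by (simp add: affine_pieces_on_def)
  moreover have "affine_pieces_on (UNIV \<inter> {z..}) g2 (drop m ts) (drop m a2) (drop m c2)"
    using pl2 m not_above
    by (intro affine_pieces_on_drop) (auto simp: pl_with_pieces_iff_affine_pieces_on_UNIV)
  then have "affine_pieces_on (UNIV \<inter> {z..}) g (drop m ts) (drop m a2) (drop m c2)"
    using right by (simp add: affine_pieces_on_def)
  moreover have "\<forall>t\<in>set (take n ts). t < z"
    using below by (auto simp: in_set_conv_nth)
  moreover have "\<forall>t\<in>set (drop m ts). z < t"
  proof
    fix t assume "t \<in> set (drop m ts)"
    then obtain i where "m + i < length ts" and "t = ts ! (m + i)"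
      using m by (auto simp: in_set_conv_nth less_diff_conv add.commute)
    then show "z < t" using not_above[rule_format, of "m + i"] by auto
  qed
  ultimately have "pl_with_pieces g (take n ts @ z # drop m ts)
      (take (n + 1) a1 @ drop m a2) (take (n + 1) c1 @ drop m c2)"
    unfolding pl_with_pieces_iff_affine_pieces_on_UNIV by (rule affine_pieces_on_append)
  moreover have "length (take (n + 1) a1 @ drop m a2) \<le> length ts + 2"
    using pl1 pl2 \<open>n \<le> m\<close> by (simp add: pl_with_pieces_def)
  moreover have "set (take (n + 1) a1 @ drop m a2) \<subseteq> set a1 \<union> set a2"
    by (auto dest: in_set_takeD in_set_dropD)
  ultimately show ?thesis by blast
qed

lemma leaky_relu_nonneg: "\<alpha> \<le> 1 \<Longrightarrow> 0 \<le> x \<Longrightarrow> leaky_relu \<alpha> x = x"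
  unfolding leaky_relu_def using mult_right_mono[of \<alpha> 1 x] by simp

lemma leaky_relu_nonpos: "\<alpha> \<le> 1 \<Longrightarrow> x \<le> 0 \<Longrightarrow> leaky_relu \<alpha> x = \<alpha> * x"
  unfolding leaky_relu_def using mult_right_mono_neg[of \<alpha> 1 x] by simp

lemma mono_leaky_relu: "0 \<le> \<alpha> \<Longrightarrow> mono (leaky_relu \<alpha>)"
  unfolding leaky_relu_def by (intro monoI max.mono mult_left_mono) auto

lemma affine_comp_mono_or_antimono:
  fixes g h :: "real \<Rightarrow> real"
  assumes "mono g" and "mono h \<or> antimono h"
  shows "mono (\<lambda>x. w * g (h x) + b) \<or> antimono (\<lambda>x. w * g (h x) + b)"
  using assms
  by (cases "0 \<le> w")
     (auto simp: mono_def antimono_def intro: mult_left_mono mult_left_mono_neg)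

lemma net_eval_singleton: "net_eval \<alpha> [wb] = (\<lambda>x. fst wb * x + snd wb)"
  by (cases wb) auto

lemma net_eval_Cons_Cons:
  "net_eval \<alpha> (wb # q # ps) = (\<lambda>x. fst wb * leaky_relu \<alpha> (net_eval \<alpha> (q # ps) x) + snd wb)"
  by (cases wb) auto

lemma net_eval_mono_or_antimono:
  assumes "0 \<le> \<alpha>"
  shows "mono (net_eval \<alpha> ps) \<or> antimono (net_eval \<alpha> ps)"
proof (induction ps rule: induct_list012)
  case 1
  show ?case by (simp add: monoI)
next
  case (2 wb)
  show ?case
    unfolding net_eval_singleton
    using affine_comp_mono_or_antimono[of "\<lambda>x. x" "\<lambda>x. x"] by (simp add: monoI)
next
  case (3 wb q ps)
  show ?case
    unfolding net_eval_Cons_Cons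
    using affine_comp_mono_or_antimono[OF mono_leaky_relu[OF assms] "3.IH"(2)] .
qed

lemma continuous_on_net_eval: "continuous_on S (net_eval \<alpha> ps)"
  by (induction ps rule: induct_list012)
     (auto simp: net_eval_singleton net_eval_Cons_Cons leaky_relu_def intro!: continuous_intros)

lemma mono_or_antimono_sign_split:
  fixes h :: "real \<Rightarrow> real"
  assumes mono: "mono h \<or> antimono h" and cont: "continuous_on UNIV h"
  shows "\<exists>z. \<forall>I\<in>{{..z}, {z..}}. (\<forall>x\<in>I. h x \<le> 0) \<or> (\<forall>x\<in>I. 0 \<le> h x)"
proof (cases "(\<forall>x. h x \<le> 0) \<or> (\<forall>x. 0 \<le> h x)")
  case True
  then show ?thesis by blast
next
  case False
  then obtain x1 x2 where "h x1 < 0" and "0 < h x2" by (auto simp: not_le)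
  then obtain z where "h z = 0"
    using IVT'[of h x1 0 x2] IVT2'[of h x1 0 x2] continuous_on_subset[OF cont]
    by (cases "x1 \<le> x2") auto
  consider "mono h" | "antimono h" using mono by blast
  then show ?thesis
  proof cases
    case 1
    then have "\<forall>x\<in>{..z}. h x \<le> 0" and "\<forall>x\<in>{z..}. 0 \<le> h x"
      using \<open>h z = 0\<close> by (metis atMost_iff monoD, metis atLeast_iff monoD)
    then show ?thesis by blast
  next
    case 2
    then have "\<forall>x\<in>{..z}. 0 \<le> h x" and "\<forall>x\<in>{z..}. h x \<le> 0"
      using \<open>h z = 0\<close> by (metis atMost_iff antimonoD, metis atLeast_iff antimonoD)
    then show ?thesis by blast
  qed
qed

lemma alpha_power_PL_at_most_affine: "alpha_power_PL_at_most \<alpha> 1 (\<lambda>x. w * x + b)"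
  unfolding alpha_power_PL_at_most_def pl_with_pieces_def
  by (intro exI[of _ "[]"] exI[of _ "[w]"] exI[of _ "[b]"] conjI exI[of _ w]) (auto intro: exI[of _ 0])

lemma alpha_power_PL_at_most_leaky_layer:
  assumes \<alpha>: "0 < \<alpha>" "\<alpha> \<le> 1" and h: "alpha_power_PL_at_most \<alpha> n h"
    and mono: "mono h \<or> antimono h" and cont: "continuous_on UNIV h"
  shows "alpha_power_PL_at_most \<alpha> (n + 1) (\<lambda>x. w * leaky_relu \<alpha> (h x) + b)"
proof -
  define g where "g = (\<lambda>x. w * leaky_relu \<alpha> (h x) + b)"
  obtain ts a c k0 where pl: "pl_with_pieces h ts a c" and "length a \<le> n"
    and slopes: "\<forall>s\<in>set a. \<exists>k::int. s = k0 * \<alpha> powi k"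
    using h unfolding alpha_power_PL_at_most_def by blast
  have one_sign: "\<exists>p\<in>{w, w * \<alpha>}. \<forall>x\<in>I. g x = p * h x + b"
    if "(\<forall>x\<in>I. h x \<le> 0) \<or> (\<forall>x\<in>I. 0 \<le> h x)" for I
    using that \<alpha> by (auto simp: g_def leaky_relu_nonneg leaky_relu_nonpos)
  obtain z where "\<forall>I\<in>{{..z}, {z..}}. (\<forall>x\<in>I. h x \<le> 0) \<or> (\<forall>x\<in>I. 0 \<le> h x)"
    using mono_or_antimono_sign_split[OF mono cont] by blast
  then obtain p r where p: "p \<in> {w, w * \<alpha>}" and "\<forall>x\<in>{..z}. g x = p * h x + b"
    and r: "r \<in> {w, w * \<alpha>}" and "\<forall>x\<in>{z..}. g x = r * h x + b"
    using one_sign[of "{..z}"] one_sign[of "{z..}"] by blast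
  then have left: "\<forall>x\<le>z. g x = p * h x + b" and right: "\<forall>x\<ge>z. g x = r * h x + b"
    by auto
  obtain ts' a' c' where pl': "pl_with_pieces g ts' a' c'"
    and "length a' \<le> length ts + 2" and a': "set a' \<subseteq> set (map ((*) p) a) \<union> set (map ((*) r) a)"
    using pl_with_pieces_glue[OF pl_with_pieces_affine_comp[OF pl] pl_with_pieces_affine_comp[OF pl]
        left right] by blast
  have "length a' \<le> n + 1"
    using \<open>length a' \<le> length ts + 2\<close> \<open>length a \<le> n\<close> pl by (simp add: pl_with_pieces_def)
  moreover have "\<forall>s\<in>set a'. \<exists>k::int. s = (w * k0) * \<alpha> powi k"
  proof
    fix s assume "s \<in> set a'"
    then have "s \<in> (*) p ` set a \<union> (*) r ` set a"
      using a' by auto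
    then obtain u t where u: "u \<in> {w, w * \<alpha>}" and "t \<in> set a" and s: "s = u * t"
      using p r by (elim UnE imageE) blast+
    then obtain k where t: "t = k0 * \<alpha> powi k"
      using slopes by blast
    have "\<alpha> * \<alpha> powi k = \<alpha> powi (k + 1)"
      using \<alpha> by (simp add: power_int_add_1)
    then have "s = (w * k0) * \<alpha> powi k \<or> s = (w * k0) * \<alpha> powi (k + 1)"
      using u s t by (auto simp: algebra_simps)
    then show "\<exists>k::int. s = (w * k0) * \<alpha> powi k" by blast
  qed
  ultimately show ?thesis
    using pl' unfolding alpha_power_PL_at_most_def g_def[symmetric] by blast
qed

lemma alpha_power_PL_at_most_net_eval:
  assumes "0 < \<alpha>" "\<alpha> \<le> 1" "ps \<noteq> []"
  shows "alpha_power_PL_at_most \<alpha> (length ps) (net_eval \<alpha> ps)"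
  using assms(3)
proof (induction ps rule: induct_list012)
  case (2 wb)
  show ?case
    unfolding net_eval_singleton using alpha_power_PL_at_most_affine by simp
next
  case (3 wb q ps)
  show ?case
    unfolding net_eval_Cons_Cons
    using alpha_power_PL_at_most_leaky_layer[OF assms(1,2) "3.IH"(2)]
      net_eval_mono_or_antimono continuous_on_net_eval assms(1) by simp
qed simp

theorem mainTheorem3:
  fixes \<alpha> :: real and L :: nat and f :: "real \<Rightarrow> real"
  assumes "0 < \<alpha>" and "\<alpha> < 1" and "f \<in> NN1 \<alpha> L"
  shows "alpha_power_PL_at_most \<alpha> (L + 1) f"
proof -
  obtain ps where "length ps = L + 1" and "f = net_eval \<alpha> ps"
    using assms(3) unfolding NN1_def by blast
  then show ?thesis
    using alpha_power_PL_at_most_net_eval[of \<alpha> ps] assms(1,2) by fastforce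
qed

end
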